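(* Let $f,g\colon\mathbb{R}^3\to\mathbb{R}$ be continuous (globally Lipschitz) with $|f(x,y,z)|,|g(x,y,z)|<M$ everywhere, let $\varepsilon>0$, and consider solutions $(x(t),y(t),z(t))$ of \[ \dot x = f(x,y,z),\qquad \dot y = g(x,y,z),\qquad \varepsilon\dot z = x+|z|. \] Then the sets $\{z>-x+M\varepsilon\}$ and $\{z>x-M\varepsilon\}$ are forward invariant: once a trajectory enters one of them, it stays in it for all later times. In particular, if a solution satisfies $x(\tau)<0$ and $z(\tau)=0$, then $z(t)>x(t)-M\varepsilon$ for all $t\ge\tau$, and if moreover $z(t_0)>-x(t_0)+M\varepsilon$ for some $t_0\ge\tau$, then $z(t)>0$ for all $t\ge t_0$. *)

theory Defs
  imports "HOL-Analysis.Analysis"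
begin

end

theory Submission
  imports Defs
begin

text \<open>Each of the two sets is the positivity region of \<open>u = z + \<sigma> (x - M \<epsilon>)\<close> with
  \<open>\<sigma> = \<plusminus>1\<close>. On the boundary \<open>u = 0\<close> we have \<open>\<bar>z\<bar> = \<bar>x - M \<epsilon>\<bar> \<ge> M \<epsilon> - x\<close>, so the fast equation
  gives \<open>\<epsilon> z' = x + \<bar>z\<bar> \<ge> M \<epsilon>\<close>, i.e. \<open>z' \<ge> M > \<bar>x'\<bar>\<close>. Hence \<open>u' > 0\<close> wherever \<open>u = 0\<close>, and a
  function with this property can never leave the region \<open>u > 0\<close>. The final claim combines both
  invariant sets: their intersection lies in \<open>z > 0\<close>.\<close>

lemma first_zero_after_pos:
  fixes u :: "real \<Rightarrow> real"
  assumes "a \<le> b" and cont: "continuous_on {a..b} u" and pos: "u a > 0" and nonpos: "u b \<le> 0"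
  obtains s where "a < s" "s \<le> b" "u s = 0" "\<And>t. t \<in> {a..<s} \<Longrightarrow> u t > 0"
proof -
  define S where "S = {a..b} \<inter> u -` {..0}"
  have "closed S"
    unfolding S_def by (rule continuous_closed_preimage[OF cont]) auto
  moreover have "S \<noteq> {}"
    using \<open>a \<le> b\<close> nonpos unfolding S_def by auto
  moreover have "bdd_below S"
    unfolding S_def by (auto intro: bdd_belowI[of _ a])
  ultimately have sS: "Inf S \<in> S" and below: "\<And>r. r \<in> S \<Longrightarrow> Inf S \<le> r"
    by (auto intro: closed_contains_Inf cInf_lower)
  define s where "s = Inf S"
  have s: "a \<le> s" "s \<le> b" "u s \<le> 0"
    using sS unfolding s_def S_def by auto
  with pos have "a < s"
    by (cases "a = s") auto
  have before: "u t > 0" if "t \<in> {a..<s}" for t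
    using that below[of t] s unfolding s_def S_def by fastforce
  obtain r where r: "a \<le> r" "r \<le> s" "u r = 0"
    using IVT2'[of u s 0 a] s pos continuous_on_subset[OF cont, of "{a..s}"] by auto
  with before[of r] have "u s = 0"
    by (cases "r = s") auto
  with \<open>a < s\<close> s before show thesis
    using that by blast
qed

lemma pos_persists_if_deriv_pos_at_zeros:
  fixes u u' :: "real \<Rightarrow> real"
  assumes I: "is_interval I"
    and deriv: "\<And>t. t \<in> I \<Longrightarrow> (u has_real_derivative u' t) (at t within I)"
    and deriv_pos: "\<And>t. t \<in> I \<Longrightarrow> u t = 0 \<Longrightarrow> u' t > 0"
    and "t1 \<in> I" "t2 \<in> I" "t1 \<le> t2" "u t1 > 0"
  shows "u t2 > 0"
proof (rule ccontr)
  assume "\<not> u t2 > 0"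
  have sub: "{t1..t2} \<subseteq> I"
    using mem_is_interval_1_I[OF I \<open>t1 \<in> I\<close> \<open>t2 \<in> I\<close>] by auto
  have "continuous_on {t1..t2} u"
    using continuous_on_subset[OF DERIV_continuous_on[OF deriv] sub] .
  then obtain s where s: "t1 < s" "s \<le> t2" "u s = 0" and before: "\<And>t. t \<in> {t1..<s} \<Longrightarrow> u t > 0"
    using first_zero_after_pos[OF \<open>t1 \<le> t2\<close>] \<open>u t1 > 0\<close> \<open>\<not> u t2 > 0\<close> by (metis linorder_not_less)
  have "s \<in> I"
    using sub s by auto
  then obtain d where "d > 0" and dec: "\<And>h. h > 0 \<Longrightarrow> s - h \<in> I \<Longrightarrow> h < d \<Longrightarrow> u (s - h) < u s"
    using has_real_derivative_pos_inc_left[OF deriv deriv_pos] s(3) by blast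
  define h where "h = min (d / 2) ((s - t1) / 2)"
  have "h > 0" "h < d" "s - h \<in> {t1..<s}"
    using \<open>d > 0\<close> s unfolding h_def by (auto simp: min_def field_simps)
  moreover from this sub s have "s - h \<in> I"
    by auto
  ultimately have "u (s - h) < 0"
    using dec[of h] s(3) by simp
  with before[OF \<open>s - h \<in> {t1..<s}\<close>] show False
    by simp
qed

lemma boundary_layer_forward_invariant:
  fixes x z v :: "real \<Rightarrow> real" and \<sigma> M \<epsilon> :: real
  assumes I: "is_interval I" and eps: "\<epsilon> > 0" and sigma: "\<bar>\<sigma>\<bar> = 1"
    and v_bd: "\<And>t. t \<in> I \<Longrightarrow> \<bar>v t\<bar> < M"
    and x_deriv: "\<And>t. t \<in> I \<Longrightarrow> (x has_real_derivative v t) (at t within I)"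
    and z_deriv: "\<And>t. t \<in> I \<Longrightarrow> (z has_real_derivative (x t + \<bar>z t\<bar>) / \<epsilon>) (at t within I)"
    and "t1 \<in> I" "t2 \<in> I" "t1 \<le> t2" "z t1 + \<sigma> * (x t1 - M * \<epsilon>) > 0"
  shows "z t2 + \<sigma> * (x t2 - M * \<epsilon>) > 0"
proof (rule pos_persists_if_deriv_pos_at_zeros
    [where u = "\<lambda>t. z t + \<sigma> * (x t - M * \<epsilon>)" and u' = "\<lambda>t. (x t + \<bar>z t\<bar>) / \<epsilon> + \<sigma> * v t",
     OF I _ _ assms(7-10)])
  show "((\<lambda>t. z t + \<sigma> * (x t - M * \<epsilon>)) has_real_derivative (x t + \<bar>z t\<bar>) / \<epsilon> + \<sigma> * v t)
      (at t within I)" if "t \<in> I" for t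
    using z_deriv[OF that] x_deriv[OF that]
    by (auto intro!: derivative_eq_intros)
  show "(x t + \<bar>z t\<bar>) / \<epsilon> + \<sigma> * v t > 0" if "t \<in> I" "z t + \<sigma> * (x t - M * \<epsilon>) = 0" for t
  proof -
    have "z t = - (\<sigma> * (x t - M * \<epsilon>))"
      using that(2) by linarith
    then have "\<bar>z t\<bar> = \<bar>x t - M * \<epsilon>\<bar>"
      using sigma by (simp add: abs_mult)
    then have "M \<le> (x t + \<bar>z t\<bar>) / \<epsilon>"
      using eps by (simp add: field_simps)
    moreover have "\<bar>\<sigma> * v t\<bar> < M"
      using v_bd[OF that(1)] sigma by (simp add: abs_mult)
    ultimately show ?thesis
      by linarith
  qed
qed

theorem proposition1:
  fixes f g :: "real \<times> real \<times> real \<Rightarrow> real"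
    and M \<epsilon> :: real
    and x y z :: "real \<Rightarrow> real"
    and I :: "real set"
  assumes f_cont: "continuous_on UNIV f" and g_cont: "continuous_on UNIV g"
    and f_lip: "\<exists>L. L-lipschitz_on UNIV f" and g_lip: "\<exists>L. L-lipschitz_on UNIV g"
    and f_bd: "\<And>p. \<bar>f p\<bar> < M" and g_bd: "\<And>p. \<bar>g p\<bar> < M"
    and eps: "\<epsilon> > 0"
    and I: "is_interval I"
    and x_ode: "\<And>t. t \<in> I \<Longrightarrow> (x has_real_derivative f (x t, y t, z t)) (at t within I)"
    and y_ode: "\<And>t. t \<in> I \<Longrightarrow> (y has_real_derivative g (x t, y t, z t)) (at t within I)"
    and z_ode: "\<And>t. t \<in> I \<Longrightarrow> (z has_real_derivative (x t + \<bar>z t\<bar>) / \<epsilon>) (at t within I)"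
  shows "(\<forall>t1\<in>I. \<forall>t2\<in>I. t1 \<le> t2 \<longrightarrow> z t1 > - x t1 + M * \<epsilon> \<longrightarrow> z t2 > - x t2 + M * \<epsilon>)
       \<and> (\<forall>t1\<in>I. \<forall>t2\<in>I. t1 \<le> t2 \<longrightarrow> z t1 > x t1 - M * \<epsilon> \<longrightarrow> z t2 > x t2 - M * \<epsilon>)
       \<and> (\<forall>\<tau>\<in>I. x \<tau> < 0 \<and> z \<tau> = 0 \<longrightarrow>
            (\<forall>t\<in>I. t \<ge> \<tau> \<longrightarrow> z t > x t - M * \<epsilon>)
          \<and> (\<forall>t0\<in>I. t0 \<ge> \<tau> \<and> z t0 > - x t0 + M * \<epsilon> \<longrightarrow> (\<forall>t\<in>I. t \<ge> t0 \<longrightarrow> z t > 0)))"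
proof -
  note layer = boundary_layer_forward_invariant[OF I eps _ f_bd x_ode z_ode]
  have upper: "z t2 > - x t2 + M * \<epsilon>"
    if "t1 \<in> I" "t2 \<in> I" "t1 \<le> t2" "z t1 > - x t1 + M * \<epsilon>" for t1 t2
    using layer[of 1 t1 t2] that by simp
  have lower: "z t2 > x t2 - M * \<epsilon>"
    if "t1 \<in> I" "t2 \<in> I" "t1 \<le> t2" "z t1 > x t1 - M * \<epsilon>" for t1 t2
    using layer[of "-1" t1 t2] that by simp
  have "M * \<epsilon> > 0"
    using f_bd[of 0] eps by (simp add: abs_less_iff)
  then have start: "z \<tau> > x \<tau> - M * \<epsilon>" if "x \<tau> < 0" "z \<tau> = 0" for \<tau>
    using that by linarith
  have both: "z t > 0" if "z t > - x t + M * \<epsilon>" "z t > x t - M * \<epsilon>" for t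
    using that by linarith
  from upper lower start both show ?thesis
    by (meson order_trans)
qed

end
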